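(* There is an orientation of $\mathbb{RP}^3$ such that for every edge-face $\sigma$ and every $\mathrm{PGL}(4)$-class $[\mathcal{F}]$ of tetrahedra of flags, the projective tetrahedron $\mathrm{T}_{\mathcal{F}}$ associated to the $\sigma$-standard representative $\mathcal{F}$ of $[\mathcal{F}]$ is positively oriented, i.e. the simplicial identification of the standard simplex with $\mathrm{T}_{\mathcal{F}}$ sending the $m$-th vertex to $V_m$ is orientation preserving.
   Context: A flag is $(V,\eta)$, $\eta$ a plane of $\mathbb{RP}^3$ through the point $V$; non-degenerate tuples satisfy $\eta_i(V_j)=0\iff i=j$. A tetrahedron of flags $\mathcal{F}=(V_m,\eta_m)_{m=1}^4$ is a non-degenerate ordered quadruple of flags with $V_m$ not coplanar such that there is a (necessarily unique) projective tetrahedron $\mathrm{T}_{\mathcal{F}}$ with vertices $V_1,\dots,V_4$ whose interior misses every $\eta_m$. Edge-faces $\sigma=(ij)k$ are even permutations $[ijkl]$ of $\{1,2,3,4\}$. With $t_\sigma=t_{ijk}$, $e_\sigma=e_{ij}$ the triple and edge ratios ($t_{ijk}=\frac{\bar\eta_i(\bar V_j)\bar\eta_j(\bar V_k)\bar\eta_k(\bar V_i)}{\bar\eta_i(\bar V_k)\bar\eta_j(\bar V_i)\bar\eta_k(\bar V_j)}$, $e_{ij}=\frac{\bar\eta_i(\bar V_k)\bar\eta_j(\bar V_l)}{\bar\eta_i(\bar V_l)\bar\eta_j(\bar V_k)}$), the $\sigma$-standard representative of $[\mathcal{F}]$ is the unique representative with $(V_i,\eta_i)=([e_1],[e_2^*])$,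 $(V_j,\eta_j)=([e_2],[e_1^*])$, $(V_k,\eta_k)=([e_1+e_2+e_3],[t_\sigma e_1^*+e_2^*-(t_\sigma+1)e_3^*])$, $V_l=[e_\sigma e_1+e_2+X_\sigma e_3-e_4]$, $\eta_l=[e_{il}e_{lj}e_1^*+e_2^*-\bar\mu e_3^*+\bar\mu(Y-X_\sigma)e_4^*]$, where $\mu_\sigma=e_{jk}e_{ki}-e_{jk}+1$, $\bar\mu=e_{il}e_{lj}-e_{il}+1$, $X_\sigma=\mu_\sigma t_\sigma e_\sigma/(t_\sigma+1)$, $Y=(t_{jil}+1)/(t_{jil}\bar\mu)$ (existence and uniqueness of this representative is known). *)

theory Defs
  imports "HOL-Analysis.Analysis"
begin

text \<open>
  Points of RP^3 and planes of RP^3 (= points of the dual space) are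
  represented by nonzero lifts in real^4; a plane eta is evaluated on a point V by the
  dot product  eta \<bullet> V  (so e_i^* is represented by axis i 1).  All notions below are
  invariant under rescaling of lifts.  A quadruple of flags is indexed by the type 4,
  whose elements are 1, 2, 3, 4.
\<close>

definition vec4 :: "real \<Rightarrow> real \<Rightarrow> real \<Rightarrow> real \<Rightarrow> real^4" where
  "vec4 a b c d = a *\<^sub>R axis 1 1 + b *\<^sub>R axis 2 1 + c *\<^sub>R axis 3 1 + d *\<^sub>R axis 4 1"

definition pt_eq :: "real^4 \<Rightarrow> real^4 \<Rightarrow> bool" where
  "pt_eq v w \<longleftrightarrow> (\<exists>c. c \<noteq> 0 \<and> v = c *\<^sub>R w)"

definition nondeg_flags :: "(4 \<Rightarrow> real^4) \<Rightarrow> (4 \<Rightarrow> real^4) \<Rightarrow> bool" where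
  "nondeg_flags V \<eta> \<longleftrightarrow> (\<forall>m. V m \<noteq> 0 \<and> \<eta> m \<noteq> 0) \<and> (\<forall>i j. \<eta> i \<bullet> V j = 0 \<longleftrightarrow> i = j)"

definition vert_matrix :: "(4 \<Rightarrow> real^4) \<Rightarrow> real^4^4" where
  "vert_matrix W = (\<chi> m. W m)"

text \<open>The projective tetrahedra with vertices [V_1],...,[V_4] (V_m not coplanar) are
  the images of the cones {sum_m a_m s_m V_m : a_m \<ge> 0} for sign choices s; the
  interior of such a tetrahedron is the image of the open cone (all a_m > 0).\<close>
definition tet_interior_cone :: "(4 \<Rightarrow> real^4) \<Rightarrow> (4 \<Rightarrow> real) \<Rightarrow> (real^4) set" where
  "tet_interior_cone V s = {x. \<exists>a. (\<forall>m. a m > 0) \<and> x = (\<Sum>m\<in>UNIV. a m *\<^sub>R (s m *\<^sub>R V m))}"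

text \<open>s describes a projective tetrahedron with vertices V_m whose interior misses
  every plane eta_n.\<close>
definition tet_signs :: "(4 \<Rightarrow> real^4) \<Rightarrow> (4 \<Rightarrow> real^4) \<Rightarrow> (4 \<Rightarrow> real) \<Rightarrow> bool" where
  "tet_signs V \<eta> s \<longleftrightarrow> (\<forall>m. s m = 1 \<or> s m = -1) \<and>
     (\<forall>n. \<forall>x\<in>tet_interior_cone V s. \<eta> n \<bullet> x \<noteq> 0)"

definition tetra_of_flags :: "(4 \<Rightarrow> real^4) \<Rightarrow> (4 \<Rightarrow> real^4) \<Rightarrow> bool" where
  "tetra_of_flags V \<eta> \<longleftrightarrow> nondeg_flags V \<eta> \<and> det (vert_matrix V) \<noteq> 0 \<and> (\<exists>s. tet_signs V \<eta> s)"

definition triple_ratio :: "(4 \<Rightarrow> real^4) \<Rightarrow> (4 \<Rightarrow> real^4) \<Rightarrow> 4 \<Rightarrow> 4 \<Rightarrow> 4 \<Rightarrow> real" where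
  "triple_ratio V \<eta> i j k =
     ((\<eta> i \<bullet> V j) * (\<eta> j \<bullet> V k) * (\<eta> k \<bullet> V i)) / ((\<eta> i \<bullet> V k) * (\<eta> j \<bullet> V i) * (\<eta> k \<bullet> V j))"

text \<open>e_{ij} where [i j k l] is an even permutation.\<close>
definition edge_ratio :: "(4 \<Rightarrow> real^4) \<Rightarrow> (4 \<Rightarrow> real^4) \<Rightarrow> 4 \<Rightarrow> 4 \<Rightarrow> 4 \<Rightarrow> 4 \<Rightarrow> real" where
  "edge_ratio V \<eta> i j k l = ((\<eta> i \<bullet> V k) * (\<eta> j \<bullet> V l)) / ((\<eta> i \<bullet> V l) * (\<eta> j \<bullet> V k))"

text \<open>The flag quadruple (V,eta) is the sigma-standard representative of its class,
  for the edge-face sigma = [i j k l] = [p 1, p 2, p 3, p 4] (p an even permutation).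
  Completions to even permutations used for the edge ratios:
  e_jk ~ [j k i l], e_ki ~ [k i j l], e_il ~ [i l j k], e_lj ~ [l j i k].\<close>
definition sigma_standard :: "(4 \<Rightarrow> 4) \<Rightarrow> (4 \<Rightarrow> real^4) \<Rightarrow> (4 \<Rightarrow> real^4) \<Rightarrow> bool" where
  "sigma_standard p V \<eta> \<longleftrightarrow>
     (let i = p 1; j = p 2; k = p 3; l = p 4;
          t = triple_ratio V \<eta> i j k;
          e = edge_ratio V \<eta> i j k l;
          e_jk = edge_ratio V \<eta> j k i l;
          e_ki = edge_ratio V \<eta> k i j l;
          e_il = edge_ratio V \<eta> i l j k;
          e_lj = edge_ratio V \<eta> l j i k;
          t_jil = triple_ratio V \<eta> j i l;
          \<mu> = e_jk * e_ki - e_jk + 1;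
          \<mu>b = e_il * e_lj - e_il + 1;
          X = \<mu> * t * e / (t + 1);
          Y = (t_jil + 1) / (t_jil * \<mu>b)
      in pt_eq (V i) (vec4 1 0 0 0) \<and> pt_eq (\<eta> i) (vec4 0 1 0 0) \<and>
         pt_eq (V j) (vec4 0 1 0 0) \<and> pt_eq (\<eta> j) (vec4 1 0 0 0) \<and>
         pt_eq (V k) (vec4 1 1 1 0) \<and> pt_eq (\<eta> k) (vec4 t 1 (-(t + 1)) 0) \<and>
         pt_eq (V l) (vec4 e 1 X (-1)) \<and>
         pt_eq (\<eta> l) (vec4 (e_il * e_lj) 1 (-\<mu>b) (\<mu>b * (Y - X))))"

text \<open>Orientations of RP^3 correspond to orientations of R^4, encoded by a sign \<epsilon>.
  The simplicial map from the standard simplex to the tetrahedron given by signs s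
  (vertex m to [V_m]) lifts to the linear map with rows s_m V_m; it is orientation
  preserving iff \<epsilon> times its determinant is positive.\<close>
definition positively_oriented :: "real \<Rightarrow> (4 \<Rightarrow> real^4) \<Rightarrow> (4 \<Rightarrow> real) \<Rightarrow> bool" where
  "positively_oriented \<epsilon> V s \<longleftrightarrow> \<epsilon> * det (vert_matrix (\<lambda>m. s m *\<^sub>R V m)) > 0"

end

theory Submission
  imports Defs
begin

(* Up to the even relabelling sigma, the sigma-standard vertices are multiples c_m of
   e1, e2, e1 + e2 + e3 and e e1 + e2 + X e3 - e4; this matrix is triangular, so the
   lifted vertex matrix with rows s_m V_m has determinant -(s_1 c_1)...(s_4 c_4).
   If the interior of the tetrahedron misses a plane, its lifted vertices lie in one
   closed half-space of that plane (otherwise a positive combination of them lies on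
   the plane).  For eta_i = e2^* and eta_j = e1^* this makes the four coefficients
   s_m c_m of one sign, so the determinant is always negative: the orientation of RP^3
   opposite to that of R^4 works. *)

lemma det_lowerdiagonal_relabelled:
  fixes A :: "'a::comm_ring_1^'n::{finite,wellorder}^'n::{finite,wellorder}"
  assumes q: "q permutes UNIV" and lower: "\<And>i j. i < j \<Longrightarrow> A $ q i $ q j = 0"
  shows "det A = (\<Prod>i\<in>UNIV. A $ i $ i)"
proof -
  define B where "B = (\<chi> i j. A $ q i $ q j)"
  have "det B = of_int (sign q) * det (\<chi> i. A $ q i)"
    using det_permute_columns[OF q, of "\<chi> i. A $ q i"] by (simp add: B_def)
  also have "\<dots> = det A"
    using det_permute_rows[OF q, of A] by (simp flip: mult.assoc of_int_mult)
  finally have "det A = det B" ..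
  also have "\<dots> = (\<Prod>i\<in>UNIV. B $ i $ i)"
    by (rule det_lowerdiagonal) (simp add: B_def lower)
  also have "\<dots> = (\<Prod>i\<in>UNIV. A $ q i $ q i)"
    by (simp add: B_def)
  also have "\<dots> = (\<Prod>i\<in>UNIV. A $ i $ i)"
    using prod.permute[OF q, of "\<lambda>i. A $ i $ i"] by (simp add: comp_def)
  finally show ?thesis .
qed

lemma positive_weights_sum_zero:
  fixes x :: "'a::finite \<Rightarrow> real"
  assumes pos: "x a > 0" and neg: "x b < 0"
  shows "\<exists>w. (\<forall>m. w m > 0) \<and> (\<Sum>m\<in>UNIV. w m * x m) = 0"
proof -
  define T where "T = (\<Sum>m\<in>UNIV. x m)"
  define w where "w m = 1 + (if m = a then (\<bar>T\<bar> - T) / x a else 0)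
    + (if m = b then \<bar>T\<bar> / - x b else 0)" for m
  have "a \<noteq> b" using pos neg by auto
  have "w m > 0" for m
    using pos neg unfolding w_def by (auto intro!: add_pos_nonneg divide_nonneg_pos)
  moreover have
    "w m * x m = x m + (if m = a then \<bar>T\<bar> - T else 0) + (if m = b then - \<bar>T\<bar> else 0)" for m
    using pos neg \<open>a \<noteq> b\<close> by (auto simp: w_def field_simps)
  then have "(\<Sum>m\<in>UNIV. w m * x m) = T + (\<bar>T\<bar> - T) - \<bar>T\<bar>"
    by (simp add: sum.distrib T_def)
  ultimately show ?thesis by auto
qed

lemma mult_pos_if_scaled_nonneg:
  fixes d x y :: real
  assumes "0 \<le> (d * x) * (d * y)" "d \<noteq> 0" "x \<noteq> 0" "y \<noteq> 0"
  shows "0 < x * y"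
proof -
  have "0 \<le> d\<^sup>2 * (x * y)"
    using assms(1) by (simp add: power2_eq_square ac_simps)
  then have "0 \<le> x * y"
    using assms(2) by (simp add: zero_le_mult_iff)
  then show ?thesis
    using assms(3,4) by (simp add: order_le_less)
qed

(* In the numeral type 4 the element 4 is 0, so its order is 4 < 1 < 2 < 3. *)
lemma less_4_cases:
  fixes i j :: 4
  assumes "i < j"
  shows "(i = 4 \<and> (j = 1 \<or> j = 2 \<or> j = 3)) \<or> (i = 1 \<and> (j = 2 \<or> j = 3)) \<or> (i = 2 \<and> j = 3)"
  using assms exhaust_4[of i] exhaust_4[of j]
  by (auto simp: less_bit0_def bit0.Rep_numeral bit0.Rep_1)

lemma vec4_nth [simp]:
  "vec4 a b c d $ 1 = a" "vec4 a b c d $ 2 = b" "vec4 a b c d $ 3 = c" "vec4 a b c d $ 4 = d"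
  by (simp_all add: vec4_def axis_def)

lemma det_vert_matrix_evenperm:
  assumes "p permutes UNIV" "evenperm p"
  shows "det (vert_matrix (W \<circ> p)) = det (vert_matrix W)"
  using det_permute_rows[OF assms(1), of "vert_matrix W"] assms(2)
  by (simp add: vert_matrix_def sign_def)

lemma det_vert_matrix_standard:
  assumes "W 1 = a *\<^sub>R vec4 1 0 0 0" "W 2 = b *\<^sub>R vec4 0 1 0 0"
    "W 3 = c *\<^sub>R vec4 1 1 1 0" "W 4 = d *\<^sub>R vec4 e 1 X (-1)"
  shows "det (vert_matrix W) = - (a * b * c * d)"
proof -
  have "det (vert_matrix W) = (\<Prod>m\<in>UNIV. vert_matrix W $ m $ m)"
  proof (rule det_lowerdiagonal_relabelled)
    show "(\<lambda>i::4. i + 1) permutes UNIV"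
      using bij_plus_right by (rule bij_imp_permutes) simp
    have succ: "(4::4) + 1 = 1" "(1::4) + 1 = 2" "(2::4) + 1 = 3" "(3::4) + 1 = 4"
      by simp_all
    fix i j :: 4
    assume "i < j"
    then show "vert_matrix W $ (i + 1) $ (j + 1) = 0"
      by (elim less_4_cases[elim_format] disjE conjE)
        (simp_all only: succ, simp_all add: vert_matrix_def assms)
  qed
  also have "\<dots> = W 1 $ 1 * W 2 $ 2 * W 3 $ 3 * W 4 $ 4"
    unfolding UNIV_4 by (simp add: vert_matrix_def mult.assoc)
  finally show ?thesis by (simp add: assms)
qed

lemma tet_signs_same_side:
  assumes "tet_signs V \<eta> s"
  shows "0 \<le> (\<eta> n \<bullet> (s a *\<^sub>R V a)) * (\<eta> n \<bullet> (s b *\<^sub>R V b))"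
proof (rule ccontr)
  define x where "x m = \<eta> n \<bullet> (s m *\<^sub>R V m)" for m
  assume "\<not> ?thesis"
  then have "x a * x b < 0" by (simp add: x_def)
  then obtain c d where "x c > 0" "x d < 0"
    by (auto simp: mult_less_0_iff)
  then obtain w where w: "\<forall>m. w m > 0" and zero: "(\<Sum>m\<in>UNIV. w m * x m) = 0"
    using positive_weights_sum_zero by blast
  define y where "y = (\<Sum>m\<in>UNIV. w m *\<^sub>R (s m *\<^sub>R V m))"
  have "y \<in> tet_interior_cone V s"
    unfolding tet_interior_cone_def y_def using w by blast
  moreover have "\<eta> n \<bullet> y = 0"
    using zero by (simp add: y_def x_def inner_sum_right mult.assoc)
  ultimately show False
    using assms unfolding tet_signs_def by blast
qed

lemma sigma_standard_lifts:
  assumes "sigma_standard p V \<eta>"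
  obtains c1 c2 c3 c4 h1 h2 e X
  where "c1 \<noteq> 0" "c2 \<noteq> 0" "c3 \<noteq> 0" "c4 \<noteq> 0" "h1 \<noteq> 0" "h2 \<noteq> 0"
    "V (p 1) = c1 *\<^sub>R vec4 1 0 0 0" "V (p 2) = c2 *\<^sub>R vec4 0 1 0 0"
    "V (p 3) = c3 *\<^sub>R vec4 1 1 1 0" "V (p 4) = c4 *\<^sub>R vec4 e 1 X (-1)"
    "\<eta> (p 1) = h1 *\<^sub>R vec4 0 1 0 0" "\<eta> (p 2) = h2 *\<^sub>R vec4 1 0 0 0"
  using assms unfolding sigma_standard_def Let_def pt_eq_def by metis

lemma det_vert_matrix_standard_neg:
  fixes W \<eta> :: "4 \<Rightarrow> real^4"
  assumes same_side: "\<And>n a b. 0 \<le> (\<eta> n \<bullet> W a) * (\<eta> n \<bullet> W b)"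
    and nonzero: "\<alpha> \<noteq> 0" "\<beta> \<noteq> 0" "\<gamma> \<noteq> 0" "\<delta> \<noteq> 0"
    and nonzero_\<eta>: "\<mu> \<noteq> 0" "\<nu> \<noteq> 0"
    and W: "W 1 = \<alpha> *\<^sub>R vec4 1 0 0 0" "W 2 = \<beta> *\<^sub>R vec4 0 1 0 0"
      "W 3 = \<gamma> *\<^sub>R vec4 1 1 1 0" "W 4 = \<delta> *\<^sub>R vec4 e 1 X (-1)"
    and \<eta>: "\<eta> 1 = \<mu> *\<^sub>R vec4 0 1 0 0" "\<eta> 2 = \<nu> *\<^sub>R vec4 1 0 0 0"
  shows "det (vert_matrix W) < 0"
proof -
  have inner: "\<eta> 1 \<bullet> W 2 = \<mu> * \<beta>" "\<eta> 1 \<bullet> W 3 = \<mu> * \<gamma>" "\<eta> 1 \<bullet> W 4 = \<mu> * \<delta>"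
    "\<eta> 2 \<bullet> W 1 = \<nu> * \<alpha>" "\<eta> 2 \<bullet> W 3 = \<nu> * \<gamma>"
    by (simp_all add: W \<eta> inner_vec_def sum_4)
  have "0 < \<beta> * \<gamma>"
    using same_side[of 1 2 3] nonzero_\<eta>(1) nonzero(2,3) unfolding inner
    by (rule mult_pos_if_scaled_nonneg)
  moreover have "0 < \<delta> * \<gamma>"
    using same_side[of 1 4 3] nonzero_\<eta>(1) nonzero(4,3) unfolding inner
    by (rule mult_pos_if_scaled_nonneg)
  moreover have "0 < \<alpha> * \<gamma>"
    using same_side[of 2 1 3] nonzero_\<eta>(2) nonzero(1,3) unfolding inner
    by (rule mult_pos_if_scaled_nonneg)
  ultimately have "0 < (\<alpha> * \<gamma>) * (\<beta> * \<gamma>) * (\<delta> * \<gamma>)"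
    by simp
  also have "\<dots> = \<gamma>\<^sup>2 * (\<alpha> * \<beta> * \<gamma> * \<delta>)"
    by (simp add: power2_eq_square ac_simps)
  finally have "0 < \<alpha> * \<beta> * \<gamma> * \<delta>"
    by (simp add: zero_less_mult_iff)
  then show ?thesis
    using det_vert_matrix_standard[OF W] by simp
qed

theorem lemma2p7:
  shows "\<exists>\<epsilon>::real. (\<epsilon> = 1 \<or> \<epsilon> = -1) \<and>
    (\<forall>(p::4 \<Rightarrow> 4) (V::4 \<Rightarrow> real^4) (\<eta>::4 \<Rightarrow> real^4) (s::4 \<Rightarrow> real).
       p permutes UNIV \<and> evenperm p \<and> tetra_of_flags V \<eta> \<and> sigma_standard p V \<eta> \<and>
       tet_signs V \<eta> s \<longrightarrow> positively_oriented \<epsilon> V s)"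
proof (intro exI[of _ "-1"] conjI allI impI disjI2 refl)
  fix p :: "4 \<Rightarrow> 4" and V \<eta> :: "4 \<Rightarrow> real^4" and s :: "4 \<Rightarrow> real"
  assume "p permutes UNIV \<and> evenperm p \<and> tetra_of_flags V \<eta> \<and> sigma_standard p V \<eta> \<and> tet_signs V \<eta> s"
  then have perm: "p permutes UNIV" "evenperm p" and std: "sigma_standard p V \<eta>"
    and tet: "tet_signs V \<eta> s" by blast+
  obtain c1 c2 c3 c4 h1 h2 e X where c: "c1 \<noteq> 0" "c2 \<noteq> 0" "c3 \<noteq> 0" "c4 \<noteq> 0"
    and h: "h1 \<noteq> 0" "h2 \<noteq> 0"
    and V: "V (p 1) = c1 *\<^sub>R vec4 1 0 0 0" "V (p 2) = c2 *\<^sub>R vec4 0 1 0 0"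
      "V (p 3) = c3 *\<^sub>R vec4 1 1 1 0" "V (p 4) = c4 *\<^sub>R vec4 e 1 X (-1)"
    and \<eta>: "\<eta> (p 1) = h1 *\<^sub>R vec4 0 1 0 0" "\<eta> (p 2) = h2 *\<^sub>R vec4 1 0 0 0"
    using sigma_standard_lifts[OF std] by blast
  define W where "W = (\<lambda>m. s m *\<^sub>R V m)"
  have s: "s m \<noteq> 0" for m
    using tet unfolding tet_signs_def by (metis neg_equal_0_iff_equal zero_neq_one)
  have "det (vert_matrix (W \<circ> p)) < 0"
  proof (rule det_vert_matrix_standard_neg[where \<eta> = "\<eta> \<circ> p" and e = e and X = X
        and \<alpha> = "s (p 1) * c1" and \<beta> = "s (p 2) * c2" and \<gamma> = "s (p 3) * c3"
        and \<delta> = "s (p 4) * c4" and \<mu> = h1 and \<nu> = h2])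
    show "0 \<le> ((\<eta> \<circ> p) n \<bullet> (W \<circ> p) a) * ((\<eta> \<circ> p) n \<bullet> (W \<circ> p) b)" for n a b
      using tet_signs_same_side[OF tet] by (simp add: W_def)
  qed (use c h s in \<open>simp_all add: W_def V \<eta>\<close>)
  then show "positively_oriented (-1) V s"
    using det_vert_matrix_evenperm[OF perm, of W] by (simp add: positively_oriented_def W_def)
qed

end
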